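(* Let $\Delta:\mathbb R\times(1,\infty)\to\mathbb R$ be defined by $\Delta(\alpha,\rho)=\frac1{\alpha(\alpha-1)}\Big[\frac{((\rho^\alpha-1)/\alpha)^{\alpha}((\rho-\rho^\alpha)/(1-\alpha))^{1-\alpha}}{\rho-1}-1\Big]$ for $\alpha\notin\{0,1\}$ and $\Delta(1,\rho)=\Delta(0,\rho)=\frac{\rho\ln\rho}{\rho-1}-\ln\frac{e\rho\ln\rho}{\rho-1}$. Then: (a) for every $\rho>1$, $\alpha\mapsto\Delta(\alpha,\rho)$ is convex on $\mathbb R$, symmetric around $\alpha=\tfrac12$ (i.e. $\Delta(1+\alpha,\rho)=\Delta(-\alpha,\rho)$), and has its global minimum at $\alpha=\tfrac12$; (b) $\alpha\Delta(\alpha,\rho)\le\beta\Delta(\beta,\rho)$ for $0<\alpha\le\beta<\infty$, and $(1-\beta)\Delta(\beta,\rho)\le(1-\alpha)\Delta(\alpha,\rho)$ for $-\infty<\alpha\le\beta<1$; (c) for every $\alpha\in\mathbb R$, $\rho\mapsto\Delta(\alpha,\rho)$ is monotonically increasing and continuous on $(1,\infty)$, and $\lim_{\rho\to1^+}\Delta(\alpha,\rho)=0$.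
   Context: $\Delta(\alpha,\rho)$ equals $\lim_{n\to\infty}\max_{Q\in\mathcal P_n(\rho)}D_{\mathrm A}^{(\alpha)}(Q\|U_n)$, where $\mathcal P_n(\rho)$ is the set of probability mass functions on $\{1,\dots,n\}$ with positive masses and max/min mass ratio at most $\rho$, $U_n$ is uniform, and $D_{\mathrm A}^{(\alpha)}(P\|Q)=\sum_xQ(x)u_\alpha(P(x)/Q(x))$ with $u_\alpha(t)=\frac{t^\alpha-\alpha(t-1)-1}{\alpha(\alpha-1)}$ ($\alpha\notin\{0,1\}$), $u_1(t)=t\ln t+1-t$, $u_0(t)=-\ln t$. *)

theory Defs
  imports "HOL-Analysis.Analysis"
begin

definition Delta :: "real \<Rightarrow> real \<Rightarrow> real" where
  "Delta \<alpha> \<rho> =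
     (if \<alpha> = 0 \<or> \<alpha> = 1 then
        \<rho> * ln \<rho> / (\<rho> - 1) - ln (exp 1 * \<rho> * ln \<rho> / (\<rho> - 1))
      else
        (1 / (\<alpha> * (\<alpha> - 1))) *
          (((\<rho> powr \<alpha> - 1) / \<alpha>) powr \<alpha> *
            ((\<rho> - \<rho> powr \<alpha>) / (1 - \<alpha>)) powr (1 - \<alpha>) / (\<rho> - 1) - 1))"

end

theory Submission
  imports Defs
begin

text \<open>
  For \<open>1 \<le> x \<le> \<rho>\<close> let \<open>G(\<alpha>,\<rho>,x) = p u\<^sub>\<alpha>(\<rho>/x) + (1 - p) u\<^sub>\<alpha>(1/x)\<close>, \<open>p = (x-1)/(\<rho>-1)\<close>, be the
  divergence from uniform of a two-level distribution with mass ratio \<open>\<rho>\<close>. The explicit formula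
  is its maximum over \<open>x\<close>: \<open>\<Delta> - G\<close> is a positive multiple of \<open>u\<^sub>\<alpha>(x/x\<^sub>0)\<close> for an explicit \<open>x\<^sub>0 \<in> [1,\<rho>]\<close>. A maximum attained
  pointwise inherits convexity in \<open>\<alpha>\<close>, monotonicity of \<open>\<alpha> \<Delta>\<close> and monotonicity in \<open>\<rho>\<close> from \<open>G\<close>, so
  everything reduces to the generator: \<open>u\<^sub>\<alpha>\<close> is convex in \<open>t\<close> because its Bregman divergence is
  \<open>t\<^sub>0\<^sup>\<alpha> u\<^sub>\<alpha>(t/t\<^sub>0) \<ge> 0\<close>, and the representation
  \<open>u\<^sub>\<alpha>(e\<^sup>y) = \<integral>\<^sub>0\<^sup>1 y\<^sup>2 (1-v) e\<^sup>y\<^sup>v E(y(1-v)\<alpha>) dv\<close> with \<open>E(z) = (e\<^sup>z - 1)/z\<close> shows that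
  \<open>u\<^sub>\<alpha>(t)\<close> is convex in \<open>\<alpha>\<close> and \<open>\<alpha> u\<^sub>\<alpha>(t)\<close> is increasing. Symmetry follows from
  \<open>(\<rho> - \<rho>\<^sup>\<alpha>)/(1 - \<alpha>) = \<rho>\<^sup>\<alpha> (\<rho>\<^sup>1\<^sup>-\<^sup>\<alpha> - 1)/(1 - \<alpha>)\<close>, and the limit at \<open>\<rho> = 1\<close> from
  \<open>0 \<le> \<Delta> \<le> u\<^sub>\<alpha>(\<rho>) + u\<^sub>\<alpha>(1/\<rho>)\<close>.
\<close>

lemma has_integral_of_real_derivative:
  fixes F f :: "real \<Rightarrow> real"
  assumes "a \<le> b" and "\<And>x. (F has_real_derivative f x) (at x)"
  shows "(f has_integral (F b - F a)) {a..b}"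
  using assms
  by (intro fundamental_theorem_of_calculus)
     (auto simp: has_real_derivative_iff_has_vector_derivative[symmetric] intro: has_field_derivative_at_within)

lemma convex_on_integral:
  fixes f :: "'a::real_vector \<Rightarrow> 'b::euclidean_space \<Rightarrow> real"
  assumes int: "\<And>a. f a integrable_on S"
    and cvx: "\<And>v. v \<in> S \<Longrightarrow> convex_on C (\<lambda>a. f a v)"
    and "convex C"
  shows "convex_on C (\<lambda>a. integral S (f a))"
proof (rule convex_onI)
  fix t :: real and x y assume t: "0 < t" "t < 1" and xy: "x \<in> C" "y \<in> C"
  have "integral S (f ((1 - t) *\<^sub>R x + t *\<^sub>R y)) \<le> integral S (\<lambda>v. (1 - t) * f x v + t * f y v)"
    using convex_onD[OF cvx, of _ t x y] t xy
    by (intro integral_le int integrable_add integrable_on_mult_right) auto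
  also have "\<dots> = (1 - t) * integral S (f x) + t * integral S (f y)"
    by (subst integral_add) (auto intro: integrable_on_mult_right int)
  finally show "integral S (f ((1 - t) *\<^sub>R x + t *\<^sub>R y)) \<le> (1 - t) * integral S (f x) + t * integral S (f y)" .
qed fact

lemma convex_on_scaled:
  fixes f :: "real \<Rightarrow> real"
  assumes "convex_on UNIV f" shows "convex_on UNIV (\<lambda>x. f (c * x))"
proof (rule convex_onI)
  fix t x y :: real assume "0 < t" "t < 1"
  then show "f (c * ((1 - t) *\<^sub>R x + t *\<^sub>R y)) \<le> (1 - t) * f (c * x) + t * f (c * y)"
    using convex_onD[OF assms, of t "c * x" "c * y"] by (simp add: algebra_simps)
qed simp

definition exp_mean :: "real \<Rightarrow> real" where
  "exp_mean z = (if z = 0 then 1 else (exp z - 1) / z)"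

lemma exp_mean_has_integral: "((\<lambda>v. exp (z * v)) has_integral exp_mean z) {0..1}"
proof (cases "z = 0")
  case True
  then show ?thesis using has_integral_const_real[of "1::real" 0 1] by (simp add: exp_mean_def)
next
  case False
  have "((\<lambda>v. exp (z * v)) has_integral (exp (z * 1) / z - exp (z * 0) / z)) {0..1}"
    using False by (intro has_integral_of_real_derivative) (auto intro!: derivative_eq_intros)
  then show ?thesis using False by (simp add: exp_mean_def diff_divide_distrib)
qed

lemma convex_on_exp_mean: "convex_on UNIV exp_mean"
proof -
  have "convex_on UNIV (\<lambda>z. exp (z * v))" for v :: real
    using convex_on_scaled[OF exp_convex, of v] by (simp add: mult.commute)
  then have "convex_on UNIV (\<lambda>z. integral {0..1} (\<lambda>v. exp (z * v)))"
    by (intro convex_on_integral integrable_continuous_interval) (auto intro!: continuous_intros)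
  moreover have "exp_mean = (\<lambda>z. integral {0..1} (\<lambda>v. exp (z * v)))"
    by (simp add: integral_unique[OF exp_mean_has_integral] fun_eq_iff)
  ultimately show ?thesis by simp
qed

lemma exp_mean_pos: "exp_mean z > 0"
  by (cases "z > 0" "z = 0" rule: case_split[case_product case_split])
     (auto simp: exp_mean_def divide_neg_neg)

lemma mult_exp_mean_mono:
  assumes "a \<le> b" shows "a * exp_mean (k * a) \<le> b * exp_mean (k * b)"
proof (cases "k = 0")
  case True then show ?thesis using assms by (simp add: exp_mean_def)
next
  case False
  have eq: "x * exp_mean (k * x) = (exp (k * x) - 1) / k" for x
    using False by (cases "x = 0") (auto simp: exp_mean_def)
  show ?thesis
  proof (cases "k > 0")
    case True
    then show ?thesis unfolding eq using assms by (simp add: divide_right_mono mult_left_mono)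
  next
    case False
    then have "k < 0" using \<open>k \<noteq> 0\<close> by simp
    then show ?thesis unfolding eq using assms by (simp add: divide_right_mono_neg mult_left_mono_neg)
  qed
qed

text \<open>For \<open>\<alpha> = 0\<close> this differs from the paper's \<open>u\<^sub>0(t) = -ln t\<close> by the affine term \<open>t - 1\<close>, which
  does not change \<open>D\<^sub>A\<close> since \<open>\<Sum>\<^sub>x Q(x) (P(x)/Q(x) - 1) = 0\<close>.\<close>

definition u_alpha :: "real \<Rightarrow> real \<Rightarrow> real" where
  "u_alpha a t = (if a = 0 then t - 1 - ln t else if a = 1 then t * ln t - t + 1
     else (t powr a - 1 - a * (t - 1)) / (a * (a - 1)))"

lemma u_alpha_one [simp]: "u_alpha a 1 = 0"
  by (simp add: u_alpha_def)

definition u_alpha_kernel :: "real \<Rightarrow> real \<Rightarrow> real \<Rightarrow> real" where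
  "u_alpha_kernel y a v = y\<^sup>2 * (1 - v) * exp (y * v) * exp_mean (y * (1 - v) * a)"

lemma u_alpha_kernel_eq:
  assumes "a \<noteq> 0"
  shows "u_alpha_kernel y a v = y / a * (exp (y * a + y * (1 - a) * v) - exp (y * v))"
proof (cases "y * (1 - v) * a = 0")
  case True
  then have "y = 0 \<or> v = 1" using assms by auto
  then show ?thesis unfolding u_alpha_kernel_def by (auto simp: algebra_simps)
next
  case False
  have "exp (y * a + y * (1 - a) * v) = exp (y * v) * exp (y * (1 - v) * a)"
    by (simp add: exp_add[symmetric] algebra_simps)
  then show ?thesis using False unfolding u_alpha_kernel_def exp_mean_def
    by (simp add: field_simps power2_eq_square)
qed

lemma u_alpha_kernel_has_integral_generic:
  assumes a: "a \<noteq> 0" "a \<noteq> 1"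
  shows "(u_alpha_kernel y a has_integral u_alpha a (exp y)) {0..1}"
proof -
  define F where "F v = exp (y * a + y * (1 - a) * v) / (a * (1 - a)) - exp (y * v) / a" for v
  have "(F has_real_derivative y / a * (exp (y * a + y * (1 - a) * v) - exp (y * v))) (at v)" for v
  proof -
    have "1 - a \<noteq> 0" using a by simp
    then show ?thesis unfolding F_def using a
      by (auto intro!: derivative_eq_intros simp: divide_simps) (simp add: algebra_simps)
  qed
  then have "((\<lambda>v. y / a * (exp (y * a + y * (1 - a) * v) - exp (y * v))) has_integral (F 1 - F 0)) {0..1}"
    by (intro has_integral_of_real_derivative) auto
  moreover have "F 1 - F 0 = u_alpha a (exp y)"
  proof -
    have "1 - a \<noteq> 0" "a - 1 \<noteq> 0" using a by auto
    then show ?thesis using a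
      by (simp add: F_def u_alpha_def powr_def divide_simps) (simp add: algebra_simps)
  qed
  moreover have "u_alpha_kernel y a = (\<lambda>v. y / a * (exp (y * a + y * (1 - a) * v) - exp (y * v)))"
    using a by (simp add: u_alpha_kernel_eq fun_eq_iff)
  ultimately show ?thesis by simp
qed

lemma u_alpha_kernel_has_integral: "(u_alpha_kernel y a has_integral u_alpha a (exp y)) {0..1}"
proof -
  consider "a = 0" | "a = 1" | "a \<noteq> 0" "a \<noteq> 1" by blast
  then show ?thesis
  proof cases
    case 1
    define F where "F v = exp (y * v) * (y * (1 - v) + 1)" for v
    have "((\<lambda>v. y\<^sup>2 * (1 - v) * exp (y * v)) has_integral (F 1 - F 0)) {0..1}"
      unfolding F_def
      by (rule has_integral_of_real_derivative)
         (auto intro!: derivative_eq_intros simp: algebra_simps power2_eq_square)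
    moreover have "u_alpha_kernel y 0 = (\<lambda>v. y\<^sup>2 * (1 - v) * exp (y * v))"
      by (simp add: u_alpha_kernel_def exp_mean_def fun_eq_iff)
    ultimately show ?thesis using 1 by (simp add: u_alpha_def F_def algebra_simps)
  next
    case 2
    define F where "F v = y * exp y * v - exp (y * v)" for v
    have "((\<lambda>v. y * (exp y - exp (y * v))) has_integral (F 1 - F 0)) {0..1}"
      unfolding F_def
      by (rule has_integral_of_real_derivative) (auto intro!: derivative_eq_intros simp: algebra_simps)
    moreover have "u_alpha_kernel y 1 = (\<lambda>v. y * (exp y - exp (y * v)))"
      by (simp add: u_alpha_kernel_eq fun_eq_iff)
    ultimately show ?thesis using 2 by (simp add: u_alpha_def F_def algebra_simps)
  next
    case 3
    then show ?thesis by (rule u_alpha_kernel_has_integral_generic)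
  qed
qed

lemma u_alpha_eq_integral: "t > 0 \<Longrightarrow> u_alpha a t = integral {0..1} (u_alpha_kernel (ln t) a)"
  using u_alpha_kernel_has_integral[of "ln t" a] by (simp add: integral_unique)

lemma integrable_u_alpha_kernel: "u_alpha_kernel y a integrable_on {0..1}"
  using u_alpha_kernel_has_integral by blast

lemma u_alpha_nonneg: "t > 0 \<Longrightarrow> u_alpha a t \<ge> 0"
  unfolding u_alpha_eq_integral
  by (intro integral_nonneg integrable_u_alpha_kernel)
     (auto simp: u_alpha_kernel_def intro!: mult_nonneg_nonneg less_imp_le[OF exp_mean_pos])

lemma convex_on_u_alpha_order: "t > 0 \<Longrightarrow> convex_on UNIV (\<lambda>a. u_alpha a t)"
  unfolding u_alpha_eq_integral u_alpha_kernel_def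
  by (intro convex_on_integral integrable_u_alpha_kernel[unfolded u_alpha_kernel_def] convex_on_cmul
        convex_on_scaled[OF convex_on_exp_mean, simplified mult.assoc[symmetric]]) auto

lemma mult_u_alpha_mono:
  assumes t: "t > 0" and ab: "a \<le> b" shows "a * u_alpha a t \<le> b * u_alpha b t"
proof -
  have le: "a * u_alpha_kernel (ln t) a v \<le> b * u_alpha_kernel (ln t) b v" if "v \<in> {0..1}" for v
  proof -
    have "(ln t)\<^sup>2 * (1 - v) * exp (ln t * v) * (a * exp_mean (ln t * (1 - v) * a))
        \<le> (ln t)\<^sup>2 * (1 - v) * exp (ln t * v) * (b * exp_mean (ln t * (1 - v) * b))"
      using that mult_exp_mean_mono[OF ab, of "ln t * (1 - v)"] by (intro mult_left_mono) auto
    then show ?thesis unfolding u_alpha_kernel_def by (simp add: ac_simps)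
  qed
  have "integral {0..1} (\<lambda>v. a * u_alpha_kernel (ln t) a v) \<le> integral {0..1} (\<lambda>v. b * u_alpha_kernel (ln t) b v)"
    using le by (intro integral_le integrable_on_mult_right integrable_u_alpha_kernel)
  then show ?thesis using t by (simp add: u_alpha_eq_integral)
qed

definition u_alpha_deriv :: "real \<Rightarrow> real \<Rightarrow> real" where
  "u_alpha_deriv a t = (if a = 1 then ln t else (t powr (a - 1) - 1) / (a - 1))"

lemma u_alpha_tangent:
  assumes t: "t > 0" and t0: "t0 > 0"
  shows "u_alpha a t - u_alpha a t0 - u_alpha_deriv a t0 * (t - t0) = t0 powr a * u_alpha a (t / t0)"
proof -
  consider "a = 0" | "a = 1" | "a \<noteq> 0" "a \<noteq> 1" by blast
  then show ?thesis
  proof cases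
    case 1
    then show ?thesis using t t0 unfolding u_alpha_def u_alpha_deriv_def
      by (simp add: ln_div powr_minus_divide field_simps)
  next
    case 2
    then show ?thesis using t t0 unfolding u_alpha_def u_alpha_deriv_def
      by (simp add: ln_div field_simps)
  next
    case 3
    have "a * (a - 1) \<noteq> 0" "a - 1 \<noteq> 0" using 3 by auto
    moreover have "t0 powr (a - 1) = t0 powr a / t0" "(t / t0) powr a = t powr a / t0 powr a"
      using t t0 by (simp_all add: powr_diff powr_divide)
    ultimately show ?thesis using 3 t t0 unfolding u_alpha_def u_alpha_deriv_def
      by (simp add: divide_simps) (simp add: algebra_simps)
  qed
qed

lemma convex_on_u_alpha: "convex_on {0<..} (u_alpha a)"
proof (rule convex_onI)
  fix s x y :: real assume s: "0 < s" "s < 1" and xy: "x \<in> {0<..}" "y \<in> {0<..}"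
  define m where "m = (1 - s) * x + s * y"
  have m: "m > 0" unfolding m_def using xy s by (simp add: add_pos_pos)
  have support: "u_alpha a m + u_alpha_deriv a m * (z - m) \<le> u_alpha a z" if "z > 0" for z
  proof -
    have "0 \<le> m powr a * u_alpha a (z / m)" using u_alpha_nonneg[of "z / m" a] that m by simp
    then show ?thesis using u_alpha_tangent[OF that m, of a] by linarith
  qed
  have "u_alpha a m = (1 - s) * (u_alpha a m + u_alpha_deriv a m * (x - m)) + s * (u_alpha a m + u_alpha_deriv a m * (y - m))"
    unfolding m_def by (simp add: algebra_simps)
  also have "\<dots> \<le> (1 - s) * u_alpha a x + s * u_alpha a y"
    using support xy s by (intro add_mono mult_left_mono) auto
  finally show "u_alpha a ((1 - s) *\<^sub>R x + s *\<^sub>R y) \<le> (1 - s) * u_alpha a x + s * u_alpha a y"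
    by (simp add: m_def)
qed simp

lemma u_alpha_le_closed_segment:
  assumes y: "y > 0" and t: "t \<in> closed_segment 1 y" shows "u_alpha a t \<le> u_alpha a y"
proof -
  obtain s where s: "0 \<le> s" "s \<le> 1" and "t = (1 - s) * 1 + s * y"
    using t by (auto simp: closed_segment_def)
  then have "u_alpha a t \<le> (1 - s) * u_alpha a 1 + s * u_alpha a y"
    using convex_onD[OF convex_on_u_alpha, of s 1 y a] y by simp
  also have "\<dots> \<le> u_alpha a y"
    using s u_alpha_nonneg[OF y, of a] by (simp add: mult_left_le_one_le)
  finally show ?thesis .
qed

lemma u_alpha_tendsto_one: "((\<lambda>x. u_alpha a (f x)) \<longlongrightarrow> 0) F" if "(f \<longlongrightarrow> 1) F"
proof -
  have "isCont (u_alpha a) 1"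
    using convex_on_continuous[OF _ convex_on_u_alpha, of a]
    by (simp add: continuous_on_eq_continuous_at)
  then show ?thesis using isCont_tendsto_compose[OF _ that, of "u_alpha a"] by simp
qed

definition Delta_A :: "real \<Rightarrow> real \<Rightarrow> real" where
  "Delta_A r a = (r powr a - 1) / a"

definition Delta_B :: "real \<Rightarrow> real \<Rightarrow> real" where
  "Delta_B r a = (r - r powr a) / (1 - a)"

lemma Delta_eq_A_B:
  "a \<noteq> 0 \<Longrightarrow> a \<noteq> 1 \<Longrightarrow>
    Delta a r = (Delta_A r a powr a * Delta_B r a powr (1 - a) / (r - 1) - 1) / (a * (a - 1))"
  unfolding Delta_def Delta_A_def Delta_B_def by simp

lemma Delta_A_pos:
  assumes "r > 1" "a \<noteq> 0" shows "Delta_A r a > 0"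
proof (cases "a > 0")
  case True
  then show ?thesis using assms by (simp add: Delta_A_def gr_one_powr)
next
  case False
  then have "a < 0" using assms by simp
  moreover from this have "r powr a < 1" using assms powr_less_mono[of a 0 r] by simp
  ultimately show ?thesis by (simp add: Delta_A_def divide_neg_neg)
qed

lemma Delta_B_eq: "r > 0 \<Longrightarrow> a \<noteq> 1 \<Longrightarrow> Delta_B r a = r powr a * Delta_A r (1 - a)"
  by (simp add: Delta_A_def Delta_B_def powr_diff field_simps)

lemma Delta_B_pos: "r > 1 \<Longrightarrow> a \<noteq> 1 \<Longrightarrow> Delta_B r a > 0"
  using Delta_A_pos[of r "1 - a"] by (simp add: Delta_B_eq)

lemma Delta_B_minus_A: "a \<noteq> 0 \<Longrightarrow> a \<noteq> 1 \<Longrightarrow> Delta_B r a - Delta_A r a = u_alpha a r"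
  unfolding Delta_A_def Delta_B_def u_alpha_def by (simp add: divide_simps) (simp add: algebra_simps)

lemma Delta_sym:
  assumes r: "r > 1" shows "Delta (1 - a) r = Delta a r"
proof (cases "a = 0 \<or> a = 1")
  case True
  then show ?thesis by (auto simp: Delta_def)
next
  case False
  then have a: "a \<noteq> 0" "a \<noteq> 1" "1 - a \<noteq> 0" "1 - a \<noteq> 1" by auto
  have A: "Delta_A r (1 - a) = r powr (- a) * Delta_B r a"
    using Delta_B_eq[of r a] a r by (simp add: powr_minus field_simps)
  have B: "Delta_B r (1 - a) = r powr (1 - a) * Delta_A r a"
    using Delta_B_eq[of r "1 - a"] a r by simp
  have "(r powr (- a)) powr (1 - a) * (r powr (1 - a)) powr a = 1"
    using r by (simp add: powr_powr powr_add[symmetric] algebra_simps)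
  then have "Delta_A r (1 - a) powr (1 - a) * Delta_B r (1 - a) powr (1 - (1 - a))
      = Delta_A r a powr a * Delta_B r a powr (1 - a)"
    unfolding A B using r Delta_A_pos[OF r a(1)] Delta_B_pos[OF r a(2)]
    by (simp add: powr_mult ac_simps)
  moreover have "(1 - a) * (1 - a - 1) = a * (a - 1)" by (simp add: algebra_simps)
  ultimately show ?thesis using a by (simp add: Delta_eq_A_B)
qed

text \<open>\<open>two_level_div r a x\<close> is \<open>D\<^sub>A(Q\<parallel>U\<^sub>n)\<close> for the \<open>Q\<close> with mass \<open>r/(x n)\<close> on a fraction
  \<open>(x - 1)/(r - 1)\<close> of the points and \<open>1/(x n)\<close> on the others; these masses sum to one.\<close>

definition two_level_div :: "real \<Rightarrow> real \<Rightarrow> real \<Rightarrow> real" where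
  "two_level_div r a x =
     (x - 1) / (r - 1) * u_alpha a (r / x) + (1 - (x - 1) / (r - 1)) * u_alpha a (1 / x)"

lemma two_level_div_eq:
  assumes r: "r > 1" and a: "a \<noteq> 0" "a \<noteq> 1" and x: "x > 0"
  shows "two_level_div r a x =
    ((a * Delta_A r a * x + (1 - a) * Delta_B r a) / ((r - 1) * x powr a) - 1) / (a * (a - 1))"
proof -
  define p where "p = (x - 1) / (r - 1)"
  have pr: "p * (r - 1) = x - 1" unfolding p_def using r by simp
  have "(r - 1) * (p * r powr a + 1 - p) = (p * (r - 1)) * r powr a + (r - 1) - p * (r - 1)"
    by (simp add: algebra_simps)
  also have "\<dots> = a * Delta_A r a * x + (1 - a) * Delta_B r a"
    unfolding pr Delta_A_def Delta_B_def using a by (simp add: field_simps)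
  finally have L: "(r - 1) * (p * r powr a + 1 - p) = a * Delta_A r a * x + (1 - a) * Delta_B r a" .
  have T: "two_level_div r a x = ((p * r powr a + 1 - p) / x powr a - 1) / (a * (a - 1))"
  proof -
    have "two_level_div r a x = (p * (r powr a / x powr a - 1 - a * (r / x - 1))
        + (1 - p) * (1 / x powr a - 1 - a * (1 / x - 1))) / (a * (a - 1))"
      unfolding two_level_div_def p_def[symmetric] u_alpha_def using a x
      by (simp add: powr_divide add_divide_distrib)
    also have "\<dots> = ((p * r powr a + 1 - p) / x powr a - 1 - a * ((p * (r - 1) + 1) / x - 1)) / (a * (a - 1))"
      by (simp add: algebra_simps add_divide_distrib diff_divide_distrib)
    finally show ?thesis using pr x by simp
  qed
  show ?thesis unfolding T L[symmetric] using r by simp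
qed

lemma Delta_minus_two_level_div:
  assumes r: "r > 1" and a: "a \<noteq> 0" "a \<noteq> 1" and x: "x > 0"
  shows "Delta a r - two_level_div r a x =
    Delta_B r a / ((r - 1) * x powr a) * u_alpha a (x * Delta_A r a / Delta_B r a)"
proof -
  define A B where "A = Delta_A r a" and "B = Delta_B r a"
  have A: "A > 0" and B: "B > 0" unfolding A_def B_def using Delta_A_pos Delta_B_pos r a by auto
  have "A powr a * B powr (1 - a) = B * (A / B) powr a"
    using A B by (simp add: powr_divide powr_diff)
  then have D: "Delta a r = (B * (A / B) powr a / (r - 1) - 1) / (a * (a - 1))"
    using a by (simp add: Delta_eq_A_B A_def B_def)
  have "(x * A / B) powr a = x powr a * (A / B) powr a"
    using A B x by (simp add: powr_mult flip: times_divide_eq_right)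
  moreover have "a * (a - 1) \<noteq> 0" "r - 1 \<noteq> 0" "x powr a > 0" using a r x by auto
  ultimately show ?thesis
    unfolding D two_level_div_eq[OF r a x] A_def[symmetric] B_def[symmetric] u_alpha_def
    using a B by (simp add: divide_simps) (simp add: algebra_simps)
qed

lemma Delta_0_1_eq:
  assumes r: "r > 1" and a: "a = 0 \<or> a = 1"
  shows "Delta a r = u_alpha 0 (r * ln r / (r - 1))"
proof -
  have "ln (exp 1 * r * ln r / (r - 1)) = 1 + ln (r * ln r / (r - 1))"
    using r ln_mult_pos[of "exp 1" "r * ln r / (r - 1)"] by (simp add: mult.assoc)
  then show ?thesis using a by (auto simp: Delta_def u_alpha_def)
qed

lemma Delta_minus_two_level_div_0:
  assumes r: "r > 1" and x: "x > 0"
  shows "Delta 0 r - two_level_div r 0 x = u_alpha 0 (x * ln r / (r - 1))"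
proof -
  have q: "ln r / (r - 1) > 0" using r by simp
  have "ln (r * ln r / (r - 1)) = ln r + ln (ln r / (r - 1))"
    using r q ln_mult_pos[of r "ln r / (r - 1)"] by (simp add: mult.assoc)
  moreover have "ln (x * ln r / (r - 1)) = ln x + ln (ln r / (r - 1))"
    using x q ln_mult_pos[of x "ln r / (r - 1)"] by (simp add: mult.assoc)
  moreover have "ln (r / x) = ln r - ln x" "ln (1 / x) = - ln x"
    using r x by (auto simp: ln_div)
  ultimately show ?thesis using r x
    unfolding Delta_0_1_eq[OF r, of 0, simplified] two_level_div_def u_alpha_def
    by (simp add: divide_simps) (simp add: algebra_simps)
qed

lemma Delta_minus_two_level_div_1:
  assumes r: "r > 1" and x: "x > 0"
  shows "Delta 1 r - two_level_div r 1 x = u_alpha 0 (r * ln r / (r - 1) / x)"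
proof -
  have "r * ln r / (r - 1) > 0" using r by simp
  then have "ln (r * ln r / (r - 1) / x) = ln (r * ln r / (r - 1)) - ln x"
    using x by (rule ln_divide_pos)
  moreover have "ln (r / x) = ln r - ln x" "ln (1 / x) = - ln x"
    using r x by (auto simp: ln_div)
  ultimately show ?thesis using r x
    unfolding Delta_0_1_eq[OF r, of 1, simplified] two_level_div_def u_alpha_def
    by (simp add: divide_simps) (simp add: algebra_simps)
qed

lemma two_level_div_le_Delta:
  assumes r: "r > 1" and x: "x > 0" shows "two_level_div r a x \<le> Delta a r"
proof -
  consider "a = 0" | "a = 1" | "a \<noteq> 0" "a \<noteq> 1" by blast
  then show ?thesis
  proof cases
    case 1
    then show ?thesis using Delta_minus_two_level_div_0[OF r x] u_alpha_nonneg[of "x * ln r / (r - 1)" 0] r x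
      by simp
  next
    case 2
    then show ?thesis using Delta_minus_two_level_div_1[OF r x] u_alpha_nonneg[of "r * ln r / (r - 1) / x" 0] r x
      by simp
  next
    case 3
    have "Delta_A r a > 0" "Delta_B r a > 0" using Delta_A_pos Delta_B_pos r 3 by auto
    then have "0 \<le> Delta_B r a / ((r - 1) * x powr a) * u_alpha a (x * Delta_A r a / Delta_B r a)"
      using r x u_alpha_nonneg[of "x * Delta_A r a / Delta_B r a" a] by simp
    then show ?thesis using Delta_minus_two_level_div[OF r 3 x] by simp
  qed
qed

lemma Delta_B_div_A_bounds:
  assumes r: "r > 1" and a: "a \<noteq> 0" "a \<noteq> 1"
  shows "Delta_B r a / Delta_A r a \<in> {1..r}"
proof -
  define A B where "A = Delta_A r a" and "B = Delta_B r a"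
  have A: "A > 0" using Delta_A_pos r a by (auto simp: A_def)
  have "A \<le> B" using Delta_B_minus_A[OF a, of r] u_alpha_nonneg[of r a] r by (simp add: A_def B_def)
  moreover have "B \<le> r * A"
  proof -
    have "r * A - B = r powr a * (Delta_B r (1 - a) - Delta_A r (1 - a))"
      using Delta_B_eq[of r a] Delta_B_eq[of r "1 - a"] r a
      by (simp add: A_def B_def algebra_simps powr_add[symmetric])
    also have "\<dots> \<ge> 0" using Delta_B_minus_A[of "1 - a" r] u_alpha_nonneg[of r "1 - a"] r a by simp
    finally show ?thesis by simp
  qed
  ultimately show ?thesis using A by (simp add: field_simps A_def[symmetric] B_def[symmetric])
qed

lemma two_level_div_attains_Delta:
  assumes r: "r > 1" shows "\<exists>x\<in>{1..r}. two_level_div r a x = Delta a r"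
proof -
  have ln_le: "ln r \<le> r - 1" and le_rln: "r - 1 \<le> r * ln r"
    using r u_alpha_nonneg[of r 0] u_alpha_nonneg[of r 1] by (auto simp: u_alpha_def)
  consider "a = 0" | "a = 1" | "a \<noteq> 0" "a \<noteq> 1" by blast
  then show ?thesis
  proof cases
    case 1
    define x where "x = (r - 1) / ln r"
    have "x \<in> {1..r}" unfolding x_def using r ln_le le_rln by (auto simp: field_simps)
    moreover have "x * ln r / (r - 1) = 1" unfolding x_def using r by simp
    ultimately show ?thesis using 1 Delta_minus_two_level_div_0[OF r, of x] by force
  next
    case 2
    define x where "x = r * ln r / (r - 1)"
    have "r * ln r \<le> r * (r - 1)" using ln_le r by simp
    then have x: "x \<in> {1..r}" unfolding x_def using r le_rln by (auto simp: field_simps)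
    then have "Delta 1 r - two_level_div r 1 x = u_alpha 0 1"
      using Delta_minus_two_level_div_1[OF r, of x] unfolding x_def[symmetric] by simp
    then show ?thesis using x 2 by force
  next
    case 3
    define A B where "A = Delta_A r a" and "B = Delta_B r a"
    have A: "A > 0" and B: "B > 0" using Delta_A_pos Delta_B_pos r 3 by (auto simp: A_def B_def)
    have "B / A \<in> {1..r}" using Delta_B_div_A_bounds[OF r 3] by (simp add: A_def B_def)
    moreover have "two_level_div r a (B / A) = Delta a r"
      using Delta_minus_two_level_div[OF r 3, of "B / A"] A B by (simp add: A_def B_def)
    ultimately show ?thesis by blast
  qed
qed

lemma convex_on_attained_sup:
  assumes le: "\<And>a x. x \<in> X \<Longrightarrow> g a x \<le> f a"
    and attained: "\<And>a. \<exists>x\<in>X. g a x = f a"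
    and cvx: "\<And>x. x \<in> X \<Longrightarrow> convex_on C (\<lambda>a. g a x)"
    and "convex C"
  shows "convex_on C f"
proof (rule convex_onI)
  fix t :: real and y z assume t: "0 < t" "t < 1" and yz: "y \<in> C" "z \<in> C"
  obtain x where x: "x \<in> X" "g ((1 - t) *\<^sub>R y + t *\<^sub>R z) x = f ((1 - t) *\<^sub>R y + t *\<^sub>R z)"
    using attained by blast
  have "g ((1 - t) *\<^sub>R y + t *\<^sub>R z) x \<le> (1 - t) * g y x + t * g z x"
    using convex_onD[OF cvx[OF x(1)]] t yz by simp
  also have "\<dots> \<le> (1 - t) * f y + t * f z"
    using le[OF x(1)] t by (intro add_mono mult_left_mono) auto
  finally show "f ((1 - t) *\<^sub>R y + t *\<^sub>R z) \<le> (1 - t) * f y + t * f z" using x(2) by simp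
qed fact

lemma two_level_weight_bounds:
  fixes r x :: real
  assumes "r > 1" "x \<in> {1..r}" shows "0 \<le> (x - 1) / (r - 1) \<and> (x - 1) / (r - 1) \<le> 1"
  using assms by (simp add: field_simps)

lemma convex_on_two_level_div_order:
  assumes r: "r > 1" and x: "x \<in> {1..r}" shows "convex_on UNIV (\<lambda>a. two_level_div r a x)"
  unfolding two_level_div_def using two_level_weight_bounds[OF r x] r x
  by (intro convex_on_add convex_on_cmul convex_on_u_alpha_order) auto

lemma convex_on_Delta_order: "r > 1 \<Longrightarrow> convex_on UNIV (\<lambda>a. Delta a r)"
  by (rule convex_on_attained_sup[OF _ two_level_div_attains_Delta convex_on_two_level_div_order])
     (auto intro: two_level_div_le_Delta)

lemma Delta_half_le:
  assumes r: "r > 1" shows "Delta (1/2) r \<le> Delta a r"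
proof -
  have "Delta ((1 - 1/2) *\<^sub>R a + (1/2) *\<^sub>R (1 - a)) r \<le> (1 - 1/2) * Delta a r + (1/2) * Delta (1 - a) r"
    using convex_onD[OF convex_on_Delta_order[OF r], of "1/2" a "1 - a"] by simp
  then show ?thesis using Delta_sym[OF r, of a] by (simp add: field_simps)
qed

lemma mult_Delta_order_mono:
  assumes r: "r > 1" and ab: "0 < a" "a \<le> b" shows "a * Delta a r \<le> b * Delta b r"
proof -
  obtain x where x: "x \<in> {1..r}" "two_level_div r a x = Delta a r"
    using two_level_div_attains_Delta[OF r] by blast
  define p where "p = (x - 1) / (r - 1)"
  have p: "0 \<le> p" "p \<le> 1" using two_level_weight_bounds[OF r x(1)] by (simp_all add: p_def)
  have "a * two_level_div r a x = p * (a * u_alpha a (r / x)) + (1 - p) * (a * u_alpha a (1 / x))"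
    unfolding two_level_div_def p_def by (simp add: algebra_simps)
  also have "\<dots> \<le> p * (b * u_alpha b (r / x)) + (1 - p) * (b * u_alpha b (1 / x))"
    using p x(1) r mult_u_alpha_mono[OF _ ab(2)] by (intro add_mono mult_left_mono) auto
  also have "\<dots> = b * two_level_div r b x"
    unfolding two_level_div_def p_def by (simp add: algebra_simps)
  also have "\<dots> \<le> b * Delta b r" using two_level_div_le_Delta[OF r] x ab by (intro mult_left_mono) auto
  finally show ?thesis using x(2) by simp
qed

lemma two_level_div_mono_ratio:
  assumes r: "1 < r1" "r1 \<le> r2" and x: "x \<in> {1..r1}"
  shows "two_level_div r1 a x \<le> two_level_div r2 a x"
proof -
  define p s where "p = (x - 1) / (r1 - 1)" and "s = (r1 - 1) / (r2 - 1)"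
  have p: "0 \<le> p" "p \<le> 1" and s: "0 \<le> s" "s \<le> 1"
    using r x by (auto simp: p_def s_def)
  have "r1 / x = (1 - s) * (1 / x) + s * (r2 / x)"
    using r x unfolding s_def by (simp add: divide_simps) (simp add: algebra_simps)
  then have chord: "u_alpha a (r1 / x) \<le> (1 - s) * u_alpha a (1 / x) + s * u_alpha a (r2 / x)"
    using convex_onD[OF convex_on_u_alpha, of s "1 / x" "r2 / x" a] r x s by simp
  have "two_level_div r1 a x = p * u_alpha a (r1 / x) + (1 - p) * u_alpha a (1 / x)"
    unfolding two_level_div_def p_def ..
  also have "\<dots> \<le> p * ((1 - s) * u_alpha a (1 / x) + s * u_alpha a (r2 / x)) + (1 - p) * u_alpha a (1 / x)"
    using chord p by (intro add_mono mult_left_mono) auto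
  also have "\<dots> = (p * s) * u_alpha a (r2 / x) + (1 - p * s) * u_alpha a (1 / x)"
    by (simp add: algebra_simps)
  also have "p * s = (x - 1) / (r2 - 1)" using r by (simp add: p_def s_def)
  finally show ?thesis unfolding two_level_div_def .
qed

lemma mono_on_Delta_ratio: "mono_on {1<..} (Delta a)"
proof (rule mono_onI)
  fix r1 r2 :: real assume r: "r1 \<in> {1<..}" "r2 \<in> {1<..}" "r1 \<le> r2"
  obtain x where x: "x \<in> {1..r1}" "two_level_div r1 a x = Delta a r1"
    using two_level_div_attains_Delta r by blast
  have "two_level_div r1 a x \<le> two_level_div r2 a x"
    using two_level_div_mono_ratio r x(1) by simp
  also have "\<dots> \<le> Delta a r2" using two_level_div_le_Delta r x by simp
  finally show "Delta a r1 \<le> Delta a r2" using x(2) by simp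
qed

lemma continuous_on_Delta_ratio: "continuous_on {1<..} (Delta a)"
proof (cases "a = 0 \<or> a = 1")
  case True
  then have "Delta a = (\<lambda>r. r * ln r / (r - 1) - ln (exp 1 * r * ln r / (r - 1)))"
    by (auto simp: Delta_def)
  moreover have "continuous_on {1<..} (\<lambda>r::real. r * ln r / (r - 1) - ln (exp 1 * r * ln r / (r - 1)))"
    by (intro continuous_intros) auto
  ultimately show ?thesis by simp
next
  case False
  then have "Delta a = (\<lambda>r. (Delta_A r a powr a * Delta_B r a powr (1 - a) / (r - 1) - 1) / (a * (a - 1)))"
    by (simp add: Delta_eq_A_B fun_eq_iff)
  moreover have "continuous_on {1<..} (\<lambda>r. (Delta_A r a powr a * Delta_B r a powr (1 - a) / (r - 1) - 1) / (a * (a - 1)))"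
    unfolding Delta_A_def Delta_B_def
  proof (intro continuous_intros ballI)
    fix r :: real assume "r \<in> {1<..}"
    then have r: "r > 1" by simp
    show "r \<noteq> 0" "r - 1 \<noteq> 0" using r by auto
    show "(r powr a - 1) / a \<noteq> 0" using Delta_A_pos[OF r, of a] False unfolding Delta_A_def by linarith
    show "(r - r powr a) / (1 - a) \<noteq> 0" using Delta_B_pos[OF r, of a] False unfolding Delta_B_def by linarith
  qed (use False in auto)
  ultimately show ?thesis by simp
qed

lemma Delta_le_u_alpha:
  assumes r: "r > 1" shows "Delta a r \<le> u_alpha a r + u_alpha a (1 / r)"
proof -
  obtain x where x: "x \<in> {1..r}" "two_level_div r a x = Delta a r"
    using two_level_div_attains_Delta[OF r] by blast
  have "r / x \<in> closed_segment 1 r" "1 / x \<in> closed_segment 1 (1 / r)"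
    using x r by (auto simp: closed_segment_eq_real_ivl field_simps)
  then have "u_alpha a (r / x) \<le> u_alpha a r" "u_alpha a (1 / x) \<le> u_alpha a (1 / r)"
    using u_alpha_le_closed_segment r by auto
  then have "two_level_div r a x \<le> 1 * u_alpha a r + 1 * u_alpha a (1 / r)"
    unfolding two_level_div_def using two_level_weight_bounds[OF r x(1)] u_alpha_nonneg r x
    by (intro add_mono mult_mono) auto
  then show ?thesis using x(2) by simp
qed

lemma Delta_tendsto_0: "(Delta a \<longlongrightarrow> 0) (at_right 1)"
proof (rule tendsto_sandwich)
  have ev: "\<forall>\<^sub>F r in at_right 1. r > (1::real)" by (rule eventually_at_right_less)
  show "\<forall>\<^sub>F r in at_right 1. 0 \<le> Delta a r"
    using ev by eventually_elim (use two_level_div_le_Delta[of _ 1 a] in \<open>simp add: two_level_div_def\<close>)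
  show "\<forall>\<^sub>F r in at_right 1. Delta a r \<le> u_alpha a r + u_alpha a (1 / r)"
    using ev by eventually_elim (rule Delta_le_u_alpha)
  have "((\<lambda>r::real. 1 / r) \<longlongrightarrow> 1) (at_right 1)" by (auto intro!: tendsto_eq_intros)
  then show "((\<lambda>r. u_alpha a r + u_alpha a (1 / r)) \<longlongrightarrow> 0) (at_right 1)"
    using u_alpha_tendsto_one[of "\<lambda>r. r"] u_alpha_tendsto_one[of "\<lambda>r. 1 / r"] tendsto_add
    by (force intro: tendsto_ident_at)
qed simp

theorem theorem9:
  shows "(\<forall>\<rho>::real. \<rho> > 1 \<longrightarrow>
            convex_on UNIV (\<lambda>\<alpha>. Delta \<alpha> \<rho>)
          \<and> (\<forall>\<alpha>. Delta (1 + \<alpha>) \<rho> = Delta (- \<alpha>) \<rho>)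
          \<and> (\<forall>\<alpha>. Delta (1/2) \<rho> \<le> Delta \<alpha> \<rho>))
       \<and> (\<forall>\<rho>::real. \<rho> > 1 \<longrightarrow>
            (\<forall>\<alpha> \<beta>::real. 0 < \<alpha> \<and> \<alpha> \<le> \<beta> \<longrightarrow> \<alpha> * Delta \<alpha> \<rho> \<le> \<beta> * Delta \<beta> \<rho>)
          \<and> (\<forall>\<alpha> \<beta>::real. \<alpha> \<le> \<beta> \<and> \<beta> < 1 \<longrightarrow>
                (1 - \<beta>) * Delta \<beta> \<rho> \<le> (1 - \<alpha>) * Delta \<alpha> \<rho>))
       \<and> (\<forall>\<alpha>::real.
            mono_on {1<..} (Delta \<alpha>)
          \<and> continuous_on {1<..} (Delta \<alpha>)
          \<and> (Delta \<alpha> \<longlongrightarrow> 0) (at_right 1))"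
proof -
  have sym: "Delta (1 + a) r = Delta (- a) r" if "r > 1" for a r :: real
    using Delta_sym[OF that, of "- a"] by simp
  have dual_mono: "(1 - b) * Delta b r \<le> (1 - a) * Delta a r" if "r > 1" "a \<le> b" "b < 1" for a b r :: real
    using mult_Delta_order_mono[OF that(1), of "1 - b" "1 - a"] Delta_sym[OF that(1)] that by simp
  show ?thesis
    using convex_on_Delta_order sym Delta_half_le mult_Delta_order_mono dual_mono
      mono_on_Delta_ratio continuous_on_Delta_ratio Delta_tendsto_0
    by blast
qed

end
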